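(* Let $Q$ be a sequence, $G=(V,E,\delta)$ a pangenome graph, and $\mathcal{M}$ a finite set of maximal exact matches (MEMs) between $Q$ and $G$. Let $H_{MEM}$ be the vertex-weighted directed graph with vertex set $\{v^m: m\in\mathcal{M}\}$, an edge from $v^m$ to $v^{m'}$ if and only if $m\prec m'$ (for $m,m'\in\mathcal{M}$), and vertex weights $W(v^m)=|m_1|$. If $v^{m^1},\dots,v^{m^k}$ is a directed path in $H_{MEM}$ maximizing the sum of vertex weights among all directed paths in $H_{MEM}$, then $\mathcal{M}'=\{m^1,\dots,m^k\}$ is a strictly ordered subset of $\mathcal{M}$ and $len(\mathcal{M}')$ is maximum among all strictly ordered subsets of $\mathcal{M}$.
   Context: Strings are 0-indexed; $S_i$ is the character of $S$ at position $i$ and $S[i,\dots,j]$ the substring from $i$ to $j$ inclusive. A pangenome graph is a triple $G=(V,E,\delta)$ where $(V,E)$ is a finite directed graph and $\delta:V\to\Sigma^*\setminus\{\epsilon\}$ assigns a nonempty string to each vertex. A path in $G$ is a sequence of vertices $w_0,\dots,w_k$ with $(w_j,w_{j+1})\in E$ for all $j<k$; $u$ reaches $v$ if there is a path from $u$ to $v$. A match (seed) between $Q$ and $G$ is a triple $m=(v,[i,\dots,i'],[j,\dots,j'])$ with $v\in V$ and $\delta(v)[i,\dots,i']=Q[j,\dots,j']$; write $m_0=v$, $m_1=[i,\dots,i']$, $m_2=[j,\dots,j']$, and $|m_1|=i'-i+1=|m_2|$. It is left-maximal if $i=0$ or $j=0$ or $\delta(v)_{i-1}\ne Q_{j-1}$,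 right-maximal if $i'=|\delta(v)|-1$ or $j'=|Q|-1$ or $\delta(v)_{i'+1}\ne Q_{j'+1}$, and a MEM if both. For seeds $s=(v_1,[i_1,\dots,i_1'],[j_1,\dots,j_1'])$ and $t=(v_2,[i_2,\dots,i_2'],[j_2,\dots,j_2'])$, $s\prec t$ (strictly ordered) means $j_1'<j_2$ and: if $v_1=v_2$ then $i_1'<i_2$; if $v_1\ne v_2$ then $v_1$ reaches $v_2$ in $G$. A subset $\mathcal{M}'$ of seeds is strictly ordered if its elements can be listed as $m^1,\dots,m^k$ with $m^l\prec m^{l+1}$ for all $1\le l<k$. $len(\mathcal{M}')=\sum_{m\in\mathcal{M}'}|m_1|$. *)

theory Defs
  imports Main
begin

definition pangenome_graph :: "'v set \<Rightarrow> ('v \<times> 'v) set \<Rightarrow> ('v \<Rightarrow> 'a list) \<Rightarrow> bool" where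
  "pangenome_graph V E \<delta> \<longleftrightarrow> finite V \<and> E \<subseteq> V \<times> V \<and> (\<forall>v\<in>V. \<delta> v \<noteq> [])"

definition dpath :: "('u \<times> 'u) set \<Rightarrow> 'u list \<Rightarrow> bool" where
  "dpath E ws \<longleftrightarrow> ws \<noteq> [] \<and> (\<forall>j. Suc j < length ws \<longrightarrow> (ws ! j, ws ! Suc j) \<in> E)"

definition reaches :: "('v \<times> 'v) set \<Rightarrow> 'v \<Rightarrow> 'v \<Rightarrow> bool" where
  "reaches E u v \<longleftrightarrow> (\<exists>ws. dpath E ws \<and> hd ws = u \<and> last ws = v)"

type_synonym 'v seed = "'v \<times> (nat \<times> nat) \<times> (nat \<times> nat)"

definition is_match :: "'v set \<Rightarrow> ('v \<Rightarrow> 'a list) \<Rightarrow> 'a list \<Rightarrow> 'v seed \<Rightarrow> bool" where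
  "is_match V \<delta> Q m \<longleftrightarrow> (case m of (v, (i, i'), (j, j')) \<Rightarrow>
     v \<in> V \<and> i \<le> i' \<and> j \<le> j' \<and> i' < length (\<delta> v) \<and> j' < length Q \<and> i' - i = j' - j \<and>
     (\<forall>t\<le>i' - i. \<delta> v ! (i + t) = Q ! (j + t)))"

definition left_maximal :: "('v \<Rightarrow> 'a list) \<Rightarrow> 'a list \<Rightarrow> 'v seed \<Rightarrow> bool" where
  "left_maximal \<delta> Q m \<longleftrightarrow> (case m of (v, (i, i'), (j, j')) \<Rightarrow>
     i = 0 \<or> j = 0 \<or> \<delta> v ! (i - 1) \<noteq> Q ! (j - 1))"

definition right_maximal :: "('v \<Rightarrow> 'a list) \<Rightarrow> 'a list \<Rightarrow> 'v seed \<Rightarrow> bool" where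
  "right_maximal \<delta> Q m \<longleftrightarrow> (case m of (v, (i, i'), (j, j')) \<Rightarrow>
     i' = length (\<delta> v) - 1 \<or> j' = length Q - 1 \<or> \<delta> v ! (i' + 1) \<noteq> Q ! (j' + 1))"

definition is_MEM :: "'v set \<Rightarrow> ('v \<Rightarrow> 'a list) \<Rightarrow> 'a list \<Rightarrow> 'v seed \<Rightarrow> bool" where
  "is_MEM V \<delta> Q m \<longleftrightarrow> is_match V \<delta> Q m \<and> left_maximal \<delta> Q m \<and> right_maximal \<delta> Q m"

definition seed_len :: "'v seed \<Rightarrow> nat" where
  "seed_len m = (case m of (v, (i, i'), (j, j')) \<Rightarrow> i' - i + 1)"

definition prec :: "('v \<times> 'v) set \<Rightarrow> 'v seed \<Rightarrow> 'v seed \<Rightarrow> bool" where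
  "prec E s t \<longleftrightarrow> (case s of (v1, (i1, i1'), (j1, j1')) \<Rightarrow> case t of (v2, (i2, i2'), (j2, j2')) \<Rightarrow>
     j1' < j2 \<and> (if v1 = v2 then i1' < i2 else reaches E v1 v2))"

definition strictly_ordered :: "('v \<times> 'v) set \<Rightarrow> 'v seed set \<Rightarrow> bool" where
  "strictly_ordered E S \<longleftrightarrow> (\<exists>ms. distinct ms \<and> set ms = S \<and>
     (\<forall>l. Suc l < length ms \<longrightarrow> prec E (ms ! l) (ms ! Suc l)))"

definition len_seeds :: "'v seed set \<Rightarrow> nat" where
  "len_seeds S = (\<Sum>m\<in>S. seed_len m)"

(* H_MEM: vertices = M (v^m identified with m), edges m \<rightarrow> m' iff m \<prec> m', weights seed_len *)
definition H_MEM_edges :: "('v \<times> 'v) set \<Rightarrow> 'v seed set \<Rightarrow> ('v seed \<times> 'v seed) set" where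
  "H_MEM_edges E M = {(m, m'). m \<in> M \<and> m' \<in> M \<and> prec E m m'}"

definition H_MEM_path :: "('v \<times> 'v) set \<Rightarrow> 'v seed set \<Rightarrow> 'v seed list \<Rightarrow> bool" where
  "H_MEM_path E M ps \<longleftrightarrow> set ps \<subseteq> M \<and> dpath (H_MEM_edges E M) ps"

definition path_weight :: "'v seed list \<Rightarrow> nat" where
  "path_weight ps = sum_list (map seed_len ps)"

end

theory Submission
  imports Defs
begin

text \<open>Along \<open>\<prec>\<close> the end positions in the query strictly increase, so a \<open>\<prec>\<close>-chain of
  matches never repeats a seed. Hence the directed paths of \<open>H_MEM\<close> are exactly the listings of
  the nonempty strictly ordered subsets of \<open>\<M>\<close>, and the weight of such a path is the
  \<open>len\<close> of its set of vertices.\<close>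

definition query_end :: "'v seed \<Rightarrow> nat" where
  "query_end m = snd (snd (snd m))"

lemma prec_query_end_less:
  assumes "is_match V \<delta> Q t" and "prec E s t"
  shows "query_end s < query_end t"
  using assms unfolding prec_def is_match_def query_end_def
  by (auto split: prod.splits if_splits)

lemma distinct_if_successively_less_image:
  fixes f :: "'a \<Rightarrow> 'b::linorder"
  assumes "successively (\<lambda>x y. f x < f y) xs"
  shows "distinct xs"
proof -
  have "successively (<) (map f xs)"
    using assms by (simp add: successively_map)
  then have "sorted_wrt (<) (map f xs)"
    by (simp add: successively_conv_sorted_wrt)
  then have "distinct (map f xs)"
    by (simp add: strict_sorted_iff)
  then show ?thesis
    by (simp add: distinct_map)
qed

lemma distinct_if_successively_prec:
  assumes "\<forall>m\<in>set ms. is_match V \<delta> Q m" and "successively (prec E) ms"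
  shows "distinct ms"
proof (rule distinct_if_successively_less_image)
  show "successively (\<lambda>s t. query_end s < query_end t) ms"
    using assms(2) by (rule successively_mono) (use assms(1) prec_query_end_less in blast)
qed

lemma H_MEM_path_iff:
  "H_MEM_path E M ps \<longleftrightarrow> ps \<noteq> [] \<and> set ps \<subseteq> M \<and> successively (prec E) ps"
  unfolding H_MEM_path_def dpath_def H_MEM_edges_def successively_conv_nth
  by (auto intro: nth_mem)

lemma strictly_ordered_iff_successively_prec:
  assumes "\<forall>m\<in>S. is_match V \<delta> Q m"
  shows "strictly_ordered E S \<longleftrightarrow> (\<exists>ps. set ps = S \<and> successively (prec E) ps)"
  using assms distinct_if_successively_prec[of _ V \<delta> Q E]
  unfolding strictly_ordered_def successively_conv_nth by metis

lemma path_weight_eq_len_seeds: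
  "distinct ps \<Longrightarrow> path_weight ps = len_seeds (set ps)"
  by (simp add: path_weight_def len_seeds_def sum_list_distinct_conv_sum_set)

theorem theorem4:
  fixes Q :: "'a list" and V :: "'v set" and E :: "('v \<times> 'v) set" and \<delta> :: "'v \<Rightarrow> 'a list"
    and M :: "'v seed set" and ms :: "'v seed list"
  assumes "pangenome_graph V E \<delta>"
    and "finite M"
    and "\<forall>m\<in>M. is_MEM V \<delta> Q m"
    and "H_MEM_path E M ms"
    and "\<forall>ps. H_MEM_path E M ps \<longrightarrow> path_weight ps \<le> path_weight ms"
  shows "set ms \<subseteq> M \<and> strictly_ordered E (set ms)
    \<and> (\<forall>S. S \<subseteq> M \<and> strictly_ordered E S \<longrightarrow> len_seeds S \<le> len_seeds (set ms))"
proof -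
  have matches: "\<forall>m\<in>M. is_match V \<delta> Q m"
    using assms(3) by (simp add: is_MEM_def)
  have ms: "set ms \<subseteq> M" "successively (prec E) ms"
    using assms(4) by (simp_all add: H_MEM_path_iff)
  have "distinct ms"
    using ms matches by (blast intro: distinct_if_successively_prec)
  have "len_seeds S \<le> len_seeds (set ms)" if S: "S \<subseteq> M" "strictly_ordered E S" for S
  proof -
    obtain ps where ps: "set ps = S" "successively (prec E) ps"
      using S matches strictly_ordered_iff_successively_prec[of S V \<delta> Q E] by blast
    have "distinct ps"
      using ps S(1) matches by (blast intro: distinct_if_successively_prec)
    show ?thesis
    proof (cases "ps = []")
      case True
      then show ?thesis using ps(1) by (simp add: len_seeds_def)
    next
      case False
      then have "path_weight ps \<le> path_weight ms"
        using assms(5) ps S(1) by (simp add: H_MEM_path_iff)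
      then show ?thesis
        using ps(1) \<open>distinct ps\<close> \<open>distinct ms\<close> by (simp add: path_weight_eq_len_seeds)
    qed
  qed
  moreover have "strictly_ordered E (set ms)"
    using ms matches strictly_ordered_iff_successively_prec[of "set ms" V \<delta> Q E] by blast
  ultimately show ?thesis
    using ms(1) by blast
qed

end
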